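(* Let $(\mathfrak{h},[\cdot,\cdot])$ be a finite-dimensional real left Leibniz algebra with $H^0(\mathfrak{h})=H^1(\mathfrak{h})=0$. Let $(A_{n,1})_{n\ge0}$ be a sequence with $A_{0,1}(x,y)=y$, $A_{1,1}(x,y)=[x,y]$, and for each $n\ge2$, $A_{n,1}:\mathfrak{h}^{n+1}\to\mathfrak{h}$ multilinear, invariant, and symmetric in its first $n$ arguments. Writing $A_{p,1}(x,y)=A_{p,1}(x,\ldots,x,y)$, assume that for all $p\ge1$ and all $x,y,z\in\mathfrak{h}$, \[A_{p,1}(x,[y,z])=[y,A_{p,1}(x,z)]+[A_{p,1}(x,y),z]+\sum_{r=1}^{p-1}[A_{r,1}(x,y),A_{p-r,1}(x,z)].\] Then there exists a unique sequence $(B_n)_{n\ge2}$ of invariant symmetric multilinear maps $B_n:\mathfrak{h}^n\to\mathfrak{h}$ such that for every $n\ge2$ and all $x,y\in\mathfrak{h}$, \[A_{n,1}(x,y)=A^0_{n,1}(x,y)+\sum_{k=1}^{[n/2]}\ \sum_{\substack{(l_1,\ldots,l_k),\ l_i\ge2\\ s=l_1+\cdots+l_k\le n}}A^0_{k,1}\big(B_{l_1}(x),\ldots,B_{l_k}(x),A^0_{n-s,1}(x,y)\big),\] where $B_l(x)=B_l(x,\ldots,x)$ and the inner sum is over ordered tuples.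
   Context: Left Leibniz algebra: bilinear bracket with $[u,[v,w]]=[[u,v],w]+[v,[u,w]]$; $\mathrm{ad}_x(y)=[x,y]$. $H^0(\mathfrak{h})=\{x\in\mathfrak{h}:[x,m]=0\ \forall m\in\mathfrak{h}\}$. $H^1(\mathfrak{h})$ is the quotient of the space of linear maps $F:\mathfrak{h}\to\mathfrak{h}$ with $F([y,z])=[y,F(z)]+[F(y),z]$ for all $y,z$, by the subspace $\{\mathrm{ad}_x:x\in\mathfrak{h}\}$. A multilinear map $A:\mathfrak{h}^{m}\to\mathfrak{h}$ is invariant if $[x,A(y_1,\ldots,y_m)]=\sum_{i=1}^mA(y_1,\ldots,[x,y_i],\ldots,y_m)$ for all $x,y_1,\ldots,y_m$. The maps $A^0_{k,1}$ are defined by $A^0_{0,1}(x,y)=y$ and $A^0_{k,1}(x_1,\ldots,x_k,y)=\frac{1}{(k!)^2}\sum_{\sigma\in S_k}\mathrm{ad}_{x_{\sigma(1)}}\circ\cdots\circ\mathrm{ad}_{x_{\sigma(k)}}(y)$ for $k\ge1$, with $A^0_{k,1}(x,y)=A^0_{k,1}(x,\ldots,x,y)$. *)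

theory Defs
  imports "HOL-Analysis.Analysis" "HOL-Combinatorics.Permutations"
begin

definition left_leibniz :: "('a::real_vector \<Rightarrow> 'a \<Rightarrow> 'a) \<Rightarrow> bool" where
  "left_leibniz br \<longleftrightarrow> bilinear br \<and>
     (\<forall>u v w. br u (br v w) = br (br u v) w + br v (br u w))"

definition H0_zero :: "('a::real_vector \<Rightarrow> 'a \<Rightarrow> 'a) \<Rightarrow> bool" where
  "H0_zero br \<longleftrightarrow> {x. \<forall>m. br x m = 0} = {0}"

definition derivations :: "('a::real_vector \<Rightarrow> 'a \<Rightarrow> 'a) \<Rightarrow> ('a \<Rightarrow> 'a) set" where
  "derivations br = {F. linear F \<and> (\<forall>y z. F (br y z) = br y (F z) + br (F y) z)}"

definition inner_derivations :: "('a::real_vector \<Rightarrow> 'a \<Rightarrow> 'a) \<Rightarrow> ('a \<Rightarrow> 'a) set" where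
  "inner_derivations br = {br x | x. True}"

definition H1_zero :: "('a::real_vector \<Rightarrow> 'a \<Rightarrow> 'a) \<Rightarrow> bool" where
  "H1_zero br \<longleftrightarrow> derivations br \<subseteq> inner_derivations br"

text \<open>m-ary maps are represented as functions on lists; only lists of length m matter.\<close>
definition multilinear :: "nat \<Rightarrow> ('a::real_vector list \<Rightarrow> 'b::real_vector) \<Rightarrow> bool" where
  "multilinear m F \<longleftrightarrow> (\<forall>xs i. length xs = m \<and> i < m \<longrightarrow> linear (\<lambda>v. F (xs[i := v])))"

definition invariant :: "('a::real_vector \<Rightarrow> 'a \<Rightarrow> 'a) \<Rightarrow> nat \<Rightarrow> ('a list \<Rightarrow> 'a) \<Rightarrow> bool" where
  "invariant br m F \<longleftrightarrow> (\<forall>x ys. length ys = m \<longrightarrow>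
      br x (F ys) = (\<Sum>i<m. F (ys[i := br x (ys ! i)])))"

definition symmetric_map :: "nat \<Rightarrow> ('a list \<Rightarrow> 'b) \<Rightarrow> bool" where
  "symmetric_map m F \<longleftrightarrow> (\<forall>xs \<sigma>. length xs = m \<and> \<sigma> permutes {..<m} \<longrightarrow>
      F (permute_list \<sigma> xs) = F xs)"

definition symmetric_first :: "nat \<Rightarrow> ('a list \<Rightarrow> 'b) \<Rightarrow> bool" where
  "symmetric_first n F \<longleftrightarrow> (\<forall>xs y \<sigma>. length xs = n \<and> \<sigma> permutes {..<n} \<longrightarrow>
      F (permute_list \<sigma> xs @ [y]) = F (xs @ [y]))"

definition A0 :: "('a::real_vector \<Rightarrow> 'a \<Rightarrow> 'a) \<Rightarrow> 'a list \<Rightarrow> 'a \<Rightarrow> 'a" where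
  "A0 br xs y = (1 / (fact (length xs))^2) *\<^sub>R
     (\<Sum>\<sigma>\<in>{\<sigma>. \<sigma> permutes {..<length xs}}. foldr br (permute_list \<sigma> xs) y)"

definition diag :: "nat \<Rightarrow> ('a list \<Rightarrow> 'a) \<Rightarrow> 'a \<Rightarrow> 'a \<Rightarrow> 'a" where
  "diag p F x y = F (replicate p x @ [y])"

end

theory Submission
  imports Defs
begin

text \<open>Read \<open>A_{n,1}(x, y)\<close> as the coefficients of a formal power series in \<open>t\<close>. The recursion
  hypothesis says precisely that this series is a homomorphism in \<open>y\<close> for the bracket extended to
  series, and so is \<open>exp(ad B(x)) exp(t ad x) y\<close> with \<open>B(x) = \<Sum>\<^sub>l t\<^sup>l B_l(x, \<dots>, x)\<close> (\<open>l \<ge> 2\<close>),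
  whose coefficient of \<open>t\<^sup>n\<close> is the right-hand side of the claimed identity. Construct \<open>B_n\<close> by
  induction: if the two series agree below degree \<open>n\<close>, their difference in degree \<open>n\<close> is a derivation,
  hence inner because \<open>H\<^sup>1 = 0\<close>; because \<open>H\<^sup>0 = 0\<close> the inducing element depends linearly on the
  derivation, and symmetrizing and polarizing turn it into a symmetric invariant multilinear \<open>B_n\<close>.
  Uniqueness runs the same argument backwards: the degree-\<open>n\<close> identity determines
  \<open>ad (B_n(x, \<dots>, x))\<close>, hence \<open>B_n\<close>.\<close>

section \<open>Multilinear maps on lists\<close>

lemma multilinear_reindex:
  assumes "multilinear M F"
    and "\<And>zs. length zs = N \<Longrightarrow> length (h zs) = M"
    and "\<And>i. i < N \<Longrightarrow> \<pi> i < M"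
    and "\<And>zs i v. length zs = N \<Longrightarrow> i < N \<Longrightarrow> h (zs[i := v]) = (h zs)[\<pi> i := v]"
  shows "multilinear N (\<lambda>zs. F (h zs))"
  using assms unfolding multilinear_def by simp

lemma multilinear_add:
  "multilinear N F \<Longrightarrow> multilinear N G \<Longrightarrow> multilinear N (\<lambda>zs. F zs + G zs)"
  unfolding multilinear_def by (auto intro: linear_compose_add)

lemma multilinear_diff:
  "multilinear N F \<Longrightarrow> multilinear N G \<Longrightarrow> multilinear N (\<lambda>zs. F zs - G zs)"
  unfolding multilinear_def by (auto intro: linear_compose_sub)

lemma multilinear_scaleR:
  "multilinear N F \<Longrightarrow> multilinear N (\<lambda>zs. c *\<^sub>R F zs)"
  unfolding multilinear_def by (auto intro: real_vector.module_hom_scale)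

lemma multilinear_zero: "multilinear N (\<lambda>zs. 0)"
  unfolding multilinear_def by (auto intro: linear_zero)

lemma multilinear_sum:
  "finite S \<Longrightarrow> (\<And>s. s \<in> S \<Longrightarrow> multilinear N (F s)) \<Longrightarrow> multilinear N (\<lambda>zs. \<Sum>s\<in>S. F s zs)"
  by (induction S rule: finite_induct) (auto intro: multilinear_add multilinear_zero)

lemma multilinear_compose_linear:
  "multilinear N F \<Longrightarrow> linear L \<Longrightarrow> multilinear N (\<lambda>zs. L (F zs))"
  unfolding multilinear_def by (auto intro: linear_compose[unfolded o_def])

lemma multilinear_hd: "multilinear 1 hd"
  unfolding multilinear_def by (auto simp: length_Suc_conv intro: linear_id[unfolded id_def])

lemma multilinear_Cons:
  "multilinear (Suc N) G \<Longrightarrow> multilinear N (\<lambda>zs. G (a # zs))"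
  by (rule multilinear_reindex[where \<pi>=Suc]) auto

lemma multilinear_snoc:
  "multilinear (Suc N) G \<Longrightarrow> multilinear N (\<lambda>xs. G (xs @ [y]))"
  using multilinear_reindex[of "Suc N" G N "\<lambda>xs. xs @ [y]" id] by (simp add: list_update_append1)

lemma linear_head_of_multilinear:
  assumes "multilinear (Suc N) G" "length zs = N"
  shows "linear (\<lambda>v. G (v # zs))"
proof -
  have "linear (\<lambda>v. G ((0 # zs)[0 := v]))"
    using assms unfolding multilinear_def by (metis length_Cons zero_less_Suc)
  then show ?thesis by simp
qed

lemma linear_last_of_multilinear:
  assumes "multilinear (Suc N) G" "length xs = N"
  shows "linear (\<lambda>y. G (xs @ [y]))"
proof -
  have "linear (\<lambda>y. G ((xs @ [0])[N := y]))"
    using assms unfolding multilinear_def by simp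
  then show ?thesis using assms(2) by (simp add: list_update_append)
qed

lemma permutes_lessThan_less: "\<sigma> permutes {..<n} \<Longrightarrow> j < n \<Longrightarrow> \<sigma> j < n"
  using permutes_in_image by fastforce

lemma permutes_lessThan_mono: "\<sigma> permutes {..<n::nat} \<Longrightarrow> n \<le> m \<Longrightarrow> \<sigma> permutes {..<m}"
  by (erule permutes_subset) auto

lemma permute_list_list_update:
  assumes "\<sigma> permutes {..<length zs}" "i < length zs"
  shows "permute_list \<sigma> (zs[\<sigma> i := v]) = (permute_list \<sigma> zs)[i := v]"
proof (rule nth_equalityI)
  fix j assume "j < length (permute_list \<sigma> (zs[\<sigma> i := v]))"
  then have j: "j < length zs" by simp
  have "\<sigma> j = \<sigma> i \<longleftrightarrow> j = i"
    using assms(1) by (metis permutes_inverses(2))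
  then show "permute_list \<sigma> (zs[\<sigma> i := v]) ! j = (permute_list \<sigma> zs)[i := v] ! j"
    using j assms by (auto simp: nth_list_update permute_list_nth permutes_lessThan_less)
qed simp

lemma permute_list_append:
  assumes "\<sigma> permutes {..<length xs}"
  shows "permute_list \<sigma> (xs @ ys) = permute_list \<sigma> xs @ ys"
proof (rule nth_equalityI)
  fix j assume "j < length (permute_list \<sigma> (xs @ ys))"
  moreover have "\<sigma> permutes {..<length (xs @ ys)}"
    using assms by (rule permutes_lessThan_mono) simp
  ultimately show "permute_list \<sigma> (xs @ ys) ! j = (permute_list \<sigma> xs @ ys) ! j"
    using assms by (cases "j < length xs")
      (simp_all add: permute_list_nth nth_append permutes_lessThan_less permutes_not_in)
qed simp

lemma permute_list_replicate:
  "\<sigma> permutes {..<n} \<Longrightarrow> permute_list \<sigma> (replicate n x) = replicate n x"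
  by (rule nth_equalityI) (simp_all add: permute_list_nth permutes_lessThan_less)

lemma permute_list_replicate_append:
  "\<sigma> permutes {..<n} \<Longrightarrow> permute_list \<sigma> (replicate n x @ ys) = replicate n x @ ys"
  by (simp add: permute_list_append permute_list_replicate)

lemma sum_list_permute_list:
  fixes xs :: "'a::comm_monoid_add list"
  assumes "\<sigma> permutes {..<length xs}"
  shows "sum_list (permute_list \<sigma> xs) = sum_list xs"
  using mset_permute_list[OF assms] by (metis sum_mset_sum_list)

lemma multilinear_permute_list:
  assumes "multilinear N F" "\<sigma> permutes {..<N}"
  shows "multilinear N (\<lambda>zs. F (permute_list \<sigma> zs))"
proof (rule multilinear_reindex[where \<pi>="inv \<sigma>", OF assms(1)])
  fix zs :: "'a list" and i v assume "length zs = N" "i < N"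
  then show "permute_list \<sigma> (zs[i := v]) = (permute_list \<sigma> zs)[inv \<sigma> i := v]"
    using permute_list_list_update[of \<sigma> zs "inv \<sigma> i" v] assms(2)
    by (simp add: permutes_inverses(1) permutes_lessThan_less permutes_inv)
qed (use assms(2) in \<open>auto intro: permutes_lessThan_less permutes_inv\<close>)

definition symmetrize :: "nat \<Rightarrow> ('b list \<Rightarrow> 'a::real_vector) \<Rightarrow> 'b list \<Rightarrow> 'a" where
  "symmetrize n F zs = (1 / fact n) *\<^sub>R (\<Sum>\<sigma>\<in>{\<sigma>. \<sigma> permutes {..<n}}. F (permute_list \<sigma> zs))"

lemma multilinear_symmetrize:
  "multilinear N F \<Longrightarrow> n \<le> N \<Longrightarrow> multilinear N (symmetrize n F)"
  unfolding symmetrize_def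
  by (intro multilinear_scaleR multilinear_sum multilinear_permute_list finite_permutations)
     (auto intro: permutes_lessThan_mono finite_lessThan)

lemma symmetrize_replicate_append:
  "symmetrize n F (replicate n x @ ys) = F (replicate n x @ ys)"
  unfolding symmetrize_def
  by (simp add: permute_list_replicate_append card_permutations sum_constant_scaleR)

lemma symmetrize_permute_list:
  assumes "\<tau> permutes {..<n}" "n \<le> length zs"
  shows "symmetrize n F (permute_list \<tau> zs) = symmetrize n F zs"
proof -
  have "(\<Sum>\<sigma>\<in>{\<sigma>. \<sigma> permutes {..<n}}. F (permute_list \<sigma> (permute_list \<tau> zs)))
      = (\<Sum>\<sigma>\<in>{\<sigma>. \<sigma> permutes {..<n}}. F (permute_list (\<tau> \<circ> \<sigma>) zs))"
    using assms by (auto intro!: sum.cong simp: permute_list_compose permutes_lessThan_mono)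
  also have "\<dots> = (\<Sum>\<sigma>\<in>{\<sigma>. \<sigma> permutes {..<n}}. F (permute_list \<sigma> zs))"
    using setum_permutations_compose_left[OF assms(1), of "\<lambda>\<sigma>. F (permute_list \<sigma> zs)"] by simp
  finally show ?thesis unfolding symmetrize_def by simp
qed

section \<open>Polarization\<close>

lemma sum_powers_add_shift:
  fixes a b :: "nat \<Rightarrow> 'a::real_vector"
  shows "(\<Sum>j\<le>N. t ^ j *\<^sub>R a j) + (\<Sum>j\<le>N. t ^ Suc j *\<^sub>R b j)
       = (\<Sum>j\<le>Suc N. t ^ j *\<^sub>R ((if j \<le> N then a j else 0) + (if j = 0 then 0 else b (j - 1))))"
proof -
  have "(\<Sum>j\<le>Suc N. t ^ j *\<^sub>R (if j \<le> N then a j else 0)) = (\<Sum>j\<le>N. t ^ j *\<^sub>R a j)"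
    by simp
  moreover have "(\<Sum>j\<le>Suc N. t ^ j *\<^sub>R (if j = 0 then 0 else b (j - 1))) = (\<Sum>j\<le>N. t ^ Suc j *\<^sub>R b j)"
    by (simp only: sum.atMost_Suc_shift) simp
  ultimately show ?thesis by (simp only: scaleR_add_right sum.distrib)
qed

lemma multilinear_replicate_polynomial:
  fixes G :: "'b::real_vector list \<Rightarrow> 'a::real_vector"
  assumes "multilinear N G"
  shows "\<exists>c. (\<forall>t. G (replicate N (x + t *\<^sub>R y)) = (\<Sum>j\<le>N. t ^ j *\<^sub>R c j))
           \<and> c 0 = G (replicate N x) \<and> c 1 = (\<Sum>i<N. G ((replicate N x)[i := y]))"
  using assms
proof (induction N arbitrary: G)
  case 0
  show ?case by (rule exI[of _ "\<lambda>j. if j = 0 then G [] else 0"]) simp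
next
  case (Suc N)
  obtain a where a: "\<forall>t. G (x # replicate N (x + t *\<^sub>R y)) = (\<Sum>j\<le>N. t ^ j *\<^sub>R a j)"
      "a 0 = G (x # replicate N x)" "a 1 = (\<Sum>i<N. G (x # (replicate N x)[i := y]))"
    using Suc.IH[OF multilinear_Cons[OF Suc.prems]] by auto
  obtain b where b: "\<forall>t. G (y # replicate N (x + t *\<^sub>R y)) = (\<Sum>j\<le>N. t ^ j *\<^sub>R b j)"
      "b 0 = G (y # replicate N x)"
    using Suc.IH[OF multilinear_Cons[OF Suc.prems]] by auto
  define c where "c j = (if j \<le> N then a j else 0) + (if j = 0 then 0 else b (j - 1))" for j
  show ?case
  proof (intro exI[of _ c] conjI allI)
    fix t :: real
    have lin: "linear (\<lambda>v. G (v # replicate N (x + t *\<^sub>R y)))"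
      by (rule linear_head_of_multilinear[OF Suc.prems]) simp
    have "G (replicate (Suc N) (x + t *\<^sub>R y))
        = G (x # replicate N (x + t *\<^sub>R y)) + t *\<^sub>R G (y # replicate N (x + t *\<^sub>R y))"
      using linear_add[OF lin] linear_scale[OF lin] by simp
    also have "\<dots> = (\<Sum>j\<le>N. t ^ j *\<^sub>R a j) + (\<Sum>j\<le>N. t ^ Suc j *\<^sub>R b j)"
      using a b by (simp add: scaleR_sum_right)
    also have "\<dots> = (\<Sum>j\<le>Suc N. t ^ j *\<^sub>R c j)"
      unfolding c_def by (rule sum_powers_add_shift)
    finally show "G (replicate (Suc N) (x + t *\<^sub>R y)) = (\<Sum>j\<le>Suc N. t ^ j *\<^sub>R c j)" .
  next
    show "c 0 = G (replicate (Suc N) x)" using a(2) by (simp add: c_def)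
  next
    have "c 1 = a 1 + b 0" using a(3) by (cases N) (simp_all add: c_def)
    then show "c 1 = (\<Sum>i<Suc N. G ((replicate (Suc N) x)[i := y]))"
      using a(3) b(2) by (simp add: sum.lessThan_Suc_shift del: sum.lessThan_Suc)
  qed
qed

lemma polynomial_eq_0_coeffs:
  fixes c :: "nat \<Rightarrow> 'a::euclidean_space"
  assumes "\<And>t::real. (\<Sum>j\<le>N. t ^ j *\<^sub>R c j) = 0" "j \<le> N"
  shows "c j = 0"
proof (rule euclidean_eqI)
  fix b :: 'a assume "b \<in> Basis"
  have "(\<Sum>j\<le>N. (c j \<bullet> b) * t ^ j) = 0" for t :: real
    using arg_cong[OF assms(1)[of t], of "\<lambda>v. v \<bullet> b"] by (simp add: inner_sum_left mult.commute)
  then show "c j \<bullet> b = 0 \<bullet> b" using polyfun_eq_0[of "\<lambda>j. c j \<bullet> b" N] assms(2) by simp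
qed

lemma replicate_list_update_eq_permute_list:
  assumes "i \<le> N"
  shows "(replicate (Suc N) x)[i := y] = permute_list (Transposition.transpose i N) (replicate N x @ [y])"
proof (rule nth_equalityI)
  fix j assume "j < length ((replicate (Suc N) x)[i := y])"
  then have j: "j < Suc N" by (simp only: length_list_update length_replicate)
  have "Transposition.transpose i N permutes {..<length (replicate N x @ [y])}"
    using assms by (intro permutes_swap_id) auto
  then show "(replicate (Suc N) x)[i := y] ! j
      = permute_list (Transposition.transpose i N) (replicate N x @ [y]) ! j"
    using j assms by (auto simp: permute_list_nth nth_append nth_list_update Transposition.transpose_def
      simp del: replicate_Suc)
qed (simp del: replicate_Suc)

text \<open>Polarization: the coefficient of \<open>t\<close> in \<open>G (x + t y, \<dots>, x + t y)\<close> is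
  \<open>N \<cdot> G (x, \<dots>, x, y)\<close> by symmetry, so a symmetric multilinear map vanishing on the diagonal
  also vanishes on \<open>(x, \<dots>, x, y)\<close>; induct on the arity with the last argument frozen.\<close>
lemma symmetric_multilinear_eq_0:
  fixes G :: "'b::real_vector list \<Rightarrow> 'a::euclidean_space"
  assumes "multilinear N G" "symmetric_map N G" "\<And>x. G (replicate N x) = 0" "length zs = N"
  shows "G zs = 0"
  using assms
proof (induction N arbitrary: G zs)
  case 0
  then show ?case by (metis replicate_0 length_0_conv)
next
  case (Suc N)
  obtain xs y where zs: "zs = xs @ [y]" and len: "length xs = N"
    using Suc.prems(4) by (metis length_Suc_conv_rev)
  have sym_last: "symmetric_map N (\<lambda>ws. G (ws @ [y]))"
    unfolding symmetric_map_def
  proof (intro allI impI)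
    fix ws :: "'b list" and \<sigma> assume "length ws = N \<and> \<sigma> permutes {..<N}"
    then show "G (permute_list \<sigma> ws @ [y]) = G (ws @ [y])"
      using Suc.prems(2) permutes_lessThan_mono[of \<sigma> N "Suc N"]
      by (simp add: symmetric_map_def permute_list_append[symmetric])
  qed
  have "G (replicate N x @ [y]) = 0" for x
  proof -
    obtain c where c: "\<forall>t. G (replicate (Suc N) (x + t *\<^sub>R y)) = (\<Sum>j\<le>Suc N. t ^ j *\<^sub>R c j)"
        "c 1 = (\<Sum>i<Suc N. G ((replicate (Suc N) x)[i := y]))"
      using multilinear_replicate_polynomial[OF Suc.prems(1), of x y] by auto
    have "G ((replicate (Suc N) x)[i := y]) = G (replicate N x @ [y])" if "i < Suc N" for i
      using Suc.prems(2) that replicate_list_update_eq_permute_list[of i N x y]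
      unfolding symmetric_map_def by (simp add: permutes_swap_id del: replicate_Suc)
    then have "c 1 = (\<Sum>i<Suc N. G (replicate N x @ [y]))"
      unfolding c(2) by (intro sum.cong) (simp_all del: replicate_Suc)
    then have "c 1 = real (Suc N) *\<^sub>R G (replicate N x @ [y])"
      by (simp only: sum_constant_scaleR card_lessThan)
    moreover have "c 1 = 0"
      by (rule polynomial_eq_0_coeffs[where N="Suc N"]) (use c(1) Suc.prems(3) in auto)
    ultimately show ?thesis by simp
  qed
  then show ?case
    using Suc.IH[OF multilinear_snoc[OF Suc.prems(1)] sym_last _ len] zs by simp
qed

section \<open>Triangular sums and tuples of weights\<close>

lemma sum_lessThan_add:
  "(\<Sum>i<p+(q::nat). f i) = (\<Sum>i<p. f i) + (\<Sum>j<q. f (p + j))"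
  by (induction q) (simp_all add: add.assoc)

lemma sum_triangle_Sigma:
  fixes h :: "nat \<Rightarrow> nat \<Rightarrow> 'a::comm_monoid_add"
  shows "(\<Sum>i\<le>n. \<Sum>j\<le>n-i. h i j) = (\<Sum>(i,j)\<in>{(i,j). i+j \<le> n}. h i j)"
proof -
  have "(\<Sum>i\<le>n. \<Sum>j\<le>n-i. h i j) = (\<Sum>(i,j)\<in>Sigma {..n} (\<lambda>i. {..n-i}). h i j)"
    by (rule sum.Sigma) auto
  also have "Sigma {..n} (\<lambda>i. {..n-i}) = {(i,j). i+j \<le> n}" by auto
  finally show ?thesis .
qed

lemma sum_triangle_swap:
  fixes h :: "nat \<Rightarrow> nat \<Rightarrow> 'a::comm_monoid_add"
  shows "(\<Sum>i\<le>n. \<Sum>j\<le>n-i. h i j) = (\<Sum>j\<le>n. \<Sum>i\<le>n-j. h i j)"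
proof -
  have "(\<Sum>(j,i)\<in>{(j,i). j+i \<le> n}. h i j) = (\<Sum>(i,j)\<in>{(i,j). i+j \<le> n}. h i j)"
    by (rule sum.reindex_bij_witness[where i=prod.swap and j=prod.swap]) auto
  then show ?thesis by (simp add: sum_triangle_Sigma)
qed

lemma sum_triangle_assoc:
  fixes g :: "nat \<Rightarrow> nat \<Rightarrow> nat \<Rightarrow> 'a::comm_monoid_add"
  shows "(\<Sum>p\<le>n. \<Sum>i\<le>p. g i (p - i) (n - p)) = (\<Sum>i\<le>n. \<Sum>j\<le>n-i. g i j (n - i - j))"
proof -
  have "(\<Sum>p\<le>n. \<Sum>i\<le>p. g i (p - i) (n - p)) = (\<Sum>p\<le>n. \<Sum>i\<le>p. g i (p - i) (n - i - (p - i)))"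
    by (intro sum.cong refl) auto
  also have "\<dots> = (\<Sum>(i,j)\<in>{(i,j). i+j \<le> n}. g i j (n - i - j))"
    using sum.triangle_reindex_eq[of "\<lambda>i j. g i j (n - i - j)" n] by simp
  finally show ?thesis by (simp add: sum_triangle_Sigma)
qed

definition tuples_ge2 :: "nat \<Rightarrow> nat \<Rightarrow> nat list set" where
  "tuples_ge2 k n = {ls. length ls = k \<and> (\<forall>l\<in>set ls. 2 \<le> l) \<and> sum_list ls \<le> n}"

lemma finite_tuples_ge2: "finite (tuples_ge2 k n)"
proof (rule finite_subset)
  show "tuples_ge2 k n \<subseteq> {xs. set xs \<subseteq> {..n} \<and> length xs = k}"
    unfolding tuples_ge2_def using member_le_sum_list by fastforce
qed (rule finite_lists_length_eq, simp)

lemma tuples_ge2_0: "tuples_ge2 0 n = {[]}"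
  by (auto simp: tuples_ge2_def)

lemma tuples_ge2_eq_empty: "n div 2 < k \<Longrightarrow> tuples_ge2 k n = {}"
proof -
  have "2 * length ls \<le> sum_list ls" if "\<forall>l\<in>set ls. 2 \<le> l" for ls :: "nat list"
    using that by (induction ls) auto
  then show "n div 2 < k \<Longrightarrow> tuples_ge2 k n = {}"
    unfolding tuples_ge2_def by fastforce
qed

lemma tuples_ge2_Suc: "tuples_ge2 (Suc k) n = (\<lambda>(i, ls). i # ls) ` (SIGMA i:{2..n}. tuples_ge2 k (n - i))"
  unfolding tuples_ge2_def by (auto simp: length_Suc_conv image_iff)

lemma tuples_ge2_less:
  assumes "ls \<in> tuples_ge2 k n" "ls \<noteq> [n]" "l \<in> set ls"
  shows "l < n"
proof (rule ccontr)
  assume "\<not> l < n"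
  obtain as bs where ls: "ls = as @ l # bs"
    using split_list[OF assms(3)] by blast
  have ge2: "\<forall>a\<in>set as. 2 \<le> a" "\<forall>b\<in>set bs. 2 \<le> b"
    and "sum_list as + l + sum_list bs \<le> n"
    using assms(1) ls by (auto simp: tuples_ge2_def)
  with \<open>\<not> l < n\<close> have "sum_list as = 0" "sum_list bs = 0" "l = n"
    by linarith+
  with ge2 have "as = []" "bs = []"
    by (cases as, simp_all, cases bs, simp_all)
  then show False using ls assms(2) \<open>l = n\<close> by simp
qed

lemma tuples_ge2_permute_list:
  assumes "\<sigma> permutes {..<k}" "ls \<in> tuples_ge2 k n"
  shows "permute_list \<sigma> ls \<in> tuples_ge2 k n"
proof -
  have "\<sigma> permutes {..<length ls}"
    using assms by (simp add: tuples_ge2_def)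
  then show ?thesis using assms by (auto simp: tuples_ge2_def sum_list_permute_list)
qed

lemma sum_tuples_ge2_permute_list:
  assumes "\<sigma> permutes {..<k}"
  shows "(\<Sum>ls\<in>tuples_ge2 k n. g (permute_list \<sigma> ls)) = (\<Sum>ls\<in>tuples_ge2 k n. g ls)"
proof (rule sum.reindex_bij_witness[where i="permute_list (inv \<sigma>)" and j="permute_list \<sigma>"])
  fix ls assume ls: "ls \<in> tuples_ge2 k n"
  then have "\<sigma> permutes {..<length ls}" "inv \<sigma> permutes {..<length ls}"
    using assms permutes_inv by (auto simp: tuples_ge2_def)
  then show "permute_list (inv \<sigma>) (permute_list \<sigma> ls) = ls" "permute_list \<sigma> (permute_list (inv \<sigma>) ls) = ls"
    by (simp_all add: permute_list_compose[symmetric] permutes_inv_o)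
  show "permute_list \<sigma> ls \<in> tuples_ge2 k n" "permute_list (inv \<sigma>) ls \<in> tuples_ge2 k n"
    using ls assms by (simp_all add: tuples_ge2_permute_list permutes_inv)
qed simp

lemma A0_replicate: "A0 br (replicate m x) y = (1 / fact m) *\<^sub>R (br x ^^ m) y"
proof -
  have "A0 br (replicate m x) y = (1 / (fact m)^2) *\<^sub>R (fact m *\<^sub>R (br x ^^ m) y)"
    unfolding A0_def by (simp add: permute_list_replicate card_permutations sum_constant_scaleR)
  then show ?thesis by (simp add: power2_eq_square)
qed

text \<open>Summing \<open>A0\<close> over all tuples lets the \<open>k!\<close> reorderings of each tuple be absorbed into
  the sum, leaving a single ordered product per tuple.\<close>
lemma sum_tuples_ge2_A0:
  "(\<Sum>ls\<in>tuples_ge2 k n. A0 br (map e ls) (w (sum_list ls)))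
     = (1 / fact k) *\<^sub>R (\<Sum>ls\<in>tuples_ge2 k n. foldr br (map e ls) (w (sum_list ls)))"
proof -
  define g where "g ls = foldr br (map e ls) (w (sum_list ls))" for ls
  have len: "ls \<in> tuples_ge2 k n \<Longrightarrow> length ls = k" for ls by (simp add: tuples_ge2_def)
  have "A0 br (map e ls) (w (sum_list ls))
      = (1 / (fact k)^2) *\<^sub>R (\<Sum>\<sigma>\<in>{\<sigma>. \<sigma> permutes {..<k}}. g (permute_list \<sigma> ls))"
    if ls: "ls \<in> tuples_ge2 k n" for ls
  proof -
    have "foldr br (permute_list \<sigma> (map e ls)) (w (sum_list ls)) = g (permute_list \<sigma> ls)"
      if "\<sigma> permutes {..<k}" for \<sigma>
      using that len[OF ls] by (simp add: g_def permute_list_map sum_list_permute_list)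
    then show ?thesis unfolding A0_def using len[OF ls] by simp
  qed
  then have "(\<Sum>ls\<in>tuples_ge2 k n. A0 br (map e ls) (w (sum_list ls)))
      = (1 / (fact k)^2) *\<^sub>R (\<Sum>\<sigma>\<in>{\<sigma>. \<sigma> permutes {..<k}}. \<Sum>ls\<in>tuples_ge2 k n. g (permute_list \<sigma> ls))"
    by (simp add: scaleR_sum_right sum.swap[of _ "tuples_ge2 k n"])
  also have "\<dots> = (1 / (fact k)^2) *\<^sub>R (\<Sum>\<sigma>\<in>{\<sigma>. \<sigma> permutes {..<k}}. \<Sum>ls\<in>tuples_ge2 k n. g ls)"
    by (simp add: sum_tuples_ge2_permute_list)
  also have "\<dots> = (1 / fact k) *\<^sub>R (\<Sum>ls\<in>tuples_ge2 k n. g ls)"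
    by (simp add: card_permutations sum_constant_scaleR power2_eq_square)
  finally show ?thesis by (simp add: g_def)
qed

section \<open>Brackets, invariant maps and series\<close>

locale bilinear_bracket =
  fixes br :: "'a::real_vector \<Rightarrow> 'a \<Rightarrow> 'a"
  assumes bilinear: "bilinear br"
begin

lemma br_linear_simps [simp]:
  "br (a + b) c = br a c + br b c" "br c (a + b) = br c a + br c b"
  "br (a - b) c = br a c - br b c" "br c (a - b) = br c a - br c b"
  "br (r *\<^sub>R a) c = r *\<^sub>R br a c" "br c (r *\<^sub>R a) = r *\<^sub>R br c a"
  "br 0 c = 0" "br c 0 = 0" "br (- a) c = - br a c" "br c (- a) = - br c a"
  using bilinear by (simp_all add: bilinear_ladd bilinear_radd bilinear_lsub bilinear_rsub
     bilinear_lmul bilinear_rmul bilinear_lzero bilinear_rzero bilinear_lneg bilinear_rneg)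

lemma br_sum_left: "br (\<Sum>i\<in>S. f i) c = (\<Sum>i\<in>S. br (f i) c)"
  by (induction S rule: infinite_finite_induct) auto

lemma br_sum_right: "br c (\<Sum>i\<in>S. f i) = (\<Sum>i\<in>S. br c (f i))"
  by (induction S rule: infinite_finite_induct) auto

lemma linear_br_left: "linear (\<lambda>a. br a c)"
  using bilinear unfolding bilinear_def by simp

lemma linear_br_right: "linear (br c)"
  using bilinear unfolding bilinear_def by simp

lemma invariant_add:
  "invariant br N F \<Longrightarrow> invariant br N G \<Longrightarrow> invariant br N (\<lambda>zs. F zs + G zs)"
  unfolding invariant_def by (auto simp: sum.distrib)

lemma invariant_diff:
  "invariant br N F \<Longrightarrow> invariant br N G \<Longrightarrow> invariant br N (\<lambda>zs. F zs - G zs)"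
  unfolding invariant_def by (auto simp: sum_subtractf)

lemma invariant_scaleR:
  "invariant br N F \<Longrightarrow> invariant br N (\<lambda>zs. c *\<^sub>R F zs)"
  unfolding invariant_def by (auto simp: scaleR_sum_right)

lemma invariant_zero: "invariant br N (\<lambda>zs. 0)"
  unfolding invariant_def by auto

lemma invariant_sum:
  "finite S \<Longrightarrow> (\<And>s. s \<in> S \<Longrightarrow> invariant br N (F s)) \<Longrightarrow> invariant br N (\<lambda>zs. \<Sum>s\<in>S. F s zs)"
  by (induction S rule: finite_induct) (auto intro: invariant_add invariant_zero)

lemma invariant_hd: "invariant br 1 hd"
  unfolding invariant_def by (auto simp: length_Suc_conv)

lemma invariant_permute_list:
  assumes F: "invariant br N F" and \<sigma>: "\<sigma> permutes {..<N}"
  shows "invariant br N (\<lambda>zs. F (permute_list \<sigma> zs))"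
  unfolding invariant_def
proof (intro allI impI)
  fix x :: 'a and ys :: "'a list" assume len: "length ys = N"
  have "br x (F (permute_list \<sigma> ys))
      = (\<Sum>i<N. F ((permute_list \<sigma> ys)[i := br x (permute_list \<sigma> ys ! i)]))"
    using F len unfolding invariant_def by simp
  also have "\<dots> = (\<Sum>i<N. F (permute_list \<sigma> (ys[\<sigma> i := br x (ys ! \<sigma> i)])))"
    using \<sigma> len by (auto intro!: sum.cong simp: permute_list_list_update permute_list_nth)
  also have "\<dots> = (\<Sum>j<N. F (permute_list \<sigma> (ys[j := br x (ys ! j)])))"
    using sum.permute[OF \<sigma>, of "\<lambda>j. F (permute_list \<sigma> (ys[j := br x (ys ! j)]))"] by (simp add: o_def)
  finally show "br x (F (permute_list \<sigma> ys)) = (\<Sum>i<N. F (permute_list \<sigma> (ys[i := br x (ys ! i)])))" .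
qed

lemma invariant_symmetrize:
  "invariant br N F \<Longrightarrow> n \<le> N \<Longrightarrow> invariant br N (symmetrize n F)"
  unfolding symmetrize_def
  by (intro invariant_scaleR invariant_sum invariant_permute_list finite_permutations)
     (auto intro: permutes_lessThan_mono)

definition bracket_split :: "nat \<Rightarrow> ('a list \<Rightarrow> 'a) \<Rightarrow> ('a list \<Rightarrow> 'a) \<Rightarrow> 'a list \<Rightarrow> 'a" where
  "bracket_split p F G zs = br (F (take p zs)) (G (drop p zs))"

lemma multilinear_bracket_split:
  assumes F: "multilinear p F" and G: "multilinear q G"
  shows "multilinear (p + q) (bracket_split p F G)"
  unfolding multilinear_def
proof (intro allI impI)
  fix xs :: "'a list" and i assume a: "length xs = p + q \<and> i < p + q"
  show "linear (\<lambda>v. bracket_split p F G (xs[i := v]))"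
  proof (cases "i < p")
    case True
    have "linear (\<lambda>v. F ((take p xs)[i := v]))" using F a True unfolding multilinear_def by auto
    then have "linear (\<lambda>v. br (F ((take p xs)[i := v])) (G (drop p xs)))"
      using linear_compose[OF _ linear_br_left] by (auto simp: o_def)
    then show ?thesis using True by (simp add: bracket_split_def take_update_swap)
  next
    case False
    have "linear (\<lambda>v. G ((drop p xs)[i - p := v]))" using G a False unfolding multilinear_def by auto
    then have "linear (\<lambda>v. br (F (take p xs)) (G ((drop p xs)[i - p := v])))"
      using linear_compose[OF _ linear_br_right] by (auto simp: o_def)
    then show ?thesis using False by (simp add: bracket_split_def drop_update_swap)
  qed
qed

definition nested_bracket :: "(nat \<times> ('a list \<Rightarrow> 'a)) list \<Rightarrow> 'a list \<Rightarrow> 'a" where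
  "nested_bracket fs = foldr (\<lambda>(l, F). bracket_split l F) fs hd"

lemma nested_bracket_simps [simp]:
  "nested_bracket [] = hd"
  "nested_bracket ((l, F) # fs) = bracket_split l F (nested_bracket fs)"
  by (simp_all add: nested_bracket_def)

lemma multilinear_nested_bracket:
  assumes "\<And>l F. (l, F) \<in> set fs \<Longrightarrow> multilinear l F"
  shows "multilinear (sum_list (map fst fs) + 1) (nested_bracket fs)"
  using assms
proof (induction fs)
  case Nil
  then show ?case using multilinear_hd by simp
next
  case (Cons lF fs)
  obtain l F where lF: "lF = (l, F)" by fastforce
  have "multilinear (l + (sum_list (map fst fs) + 1)) (bracket_split l F (nested_bracket fs))"
    using Cons lF by (intro multilinear_bracket_split) auto
  then show ?case using lF by (simp add: add.assoc)
qed

lemma nested_bracket_replicate_append: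
  "nested_bracket fs (replicate (sum_list (map fst fs)) x @ [y])
     = foldr br (map (\<lambda>(l, F). F (replicate l x)) fs) y"
  by (induction fs) (auto simp: bracket_split_def replicate_add)

text \<open>Formal power series in \<open>t\<close> are represented by their coefficient sequences \<open>nat \<Rightarrow> 'a\<close>;
  \<open>series_br\<close> is the bracket extended to series (Cauchy product).\<close>
definition series_br :: "(nat \<Rightarrow> 'a) \<Rightarrow> (nat \<Rightarrow> 'a) \<Rightarrow> nat \<Rightarrow> 'a" where
  "series_br u v n = (\<Sum>i\<le>n. br (u i) (v (n - i)))"

definition exp_ad_term :: "(nat \<Rightarrow> 'a) \<Rightarrow> nat \<Rightarrow> (nat \<Rightarrow> 'a) \<Rightarrow> nat \<Rightarrow> 'a" where
  "exp_ad_term d k u = (\<lambda>n. (1 / fact k) *\<^sub>R (series_br d ^^ k) u n)"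

definition exp_ad :: "(nat \<Rightarrow> 'a) \<Rightarrow> (nat \<Rightarrow> 'a) \<Rightarrow> nat \<Rightarrow> 'a" where
  "exp_ad d u n = (\<Sum>k\<le>n. exp_ad_term d k u n)"

definition series_monom :: "nat \<Rightarrow> 'a \<Rightarrow> nat \<Rightarrow> 'a" where
  "series_monom k v i = (if i = k then v else 0)"

lemma series_br_cong:
  "(\<And>i. i \<le> n \<Longrightarrow> u i = u' i) \<Longrightarrow> (\<And>i. i \<le> n \<Longrightarrow> v i = v' i)
    \<Longrightarrow> series_br u v n = series_br u' v' n"
  unfolding series_br_def by (intro sum.cong) auto

lemma series_br_sum_right: "series_br d (\<lambda>m. \<Sum>j\<in>J. f j m) n = (\<Sum>j\<in>J. series_br d (f j) n)"
  unfolding series_br_def by (simp add: br_sum_right) (rule sum.swap)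

lemma series_br_sum_left: "series_br (\<lambda>m. \<Sum>j\<in>J. f j m) d n = (\<Sum>j\<in>J. series_br (f j) d n)"
  unfolding series_br_def by (simp add: br_sum_left) (rule sum.swap)

lemma series_br_scaleR_right: "series_br d (\<lambda>m. c *\<^sub>R f m) n = c *\<^sub>R series_br d f n"
  unfolding series_br_def by (simp add: scaleR_sum_right)

lemma series_br_scaleR_left: "series_br (\<lambda>m. c *\<^sub>R f m) d n = c *\<^sub>R series_br f d n"
  unfolding series_br_def by (simp add: scaleR_sum_right)

lemma series_br_monom_left:
  "series_br (series_monom j a) v n = (if j \<le> n then br a (v (n - j)) else 0)"
proof -
  have "br (series_monom j a i) w = (if i = j then br a w else 0)" for i w
    by (simp add: series_monom_def)
  then show ?thesis by (simp add: series_br_def sum.delta')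
qed

lemma series_br_monom_0: "series_br (series_monom 0 y) (series_monom 0 z) = series_monom 0 (br y z)"
  by (rule ext) (simp add: series_br_monom_left series_monom_def)

lemma series_br_funpow_below: "d 0 = 0 \<Longrightarrow> i < k \<Longrightarrow> (series_br d ^^ k) u i = 0"
proof (induction k arbitrary: i)
  case (Suc k)
  have "br (d j) ((series_br d ^^ k) u (i - j)) = 0" if "j \<le> i" for j
    using Suc that by (cases j) auto
  then show ?case
    by (simp only: funpow.simps(2) o_apply series_br_def[of d "(series_br d ^^ k) u" i] sum.neutral_const)
       (simp add: sum.neutral)
qed simp

lemma exp_ad_term_below: "d 0 = 0 \<Longrightarrow> i < k \<Longrightarrow> exp_ad_term d k u i = 0"
  by (simp add: exp_ad_term_def series_br_funpow_below)

lemma exp_ad_eq_sum: "d 0 = 0 \<Longrightarrow> i \<le> n \<Longrightarrow> exp_ad d u i = (\<Sum>k\<le>n. exp_ad_term d k u i)"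
  unfolding exp_ad_def by (rule sum.mono_neutral_left) (auto simp: exp_ad_term_below)

definition ad_exp_series :: "'a \<Rightarrow> 'a \<Rightarrow> nat \<Rightarrow> 'a" where
  "ad_exp_series x y n = (1 / fact n) *\<^sub>R (br x ^^ n) y"

lemma ad_exp_series_0 [simp]: "ad_exp_series x y 0 = y"
  by (simp add: ad_exp_series_def)

lemma exp_ad_monom: "exp_ad (series_monom 1 x) (series_monom 0 y) = ad_exp_series x y"
proof
  have "(series_br (series_monom 1 x) ^^ k) (series_monom 0 y) = series_monom k ((br x ^^ k) y)" for k
  proof (induction k)
    case (Suc k)
    have "series_br (series_monom 1 x) (series_monom k v) = series_monom (Suc k) (br x v)" for v
      by (rule ext) (auto simp: series_br_monom_left series_monom_def)
    then show ?case using Suc by simp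
  qed simp
  then show "exp_ad (series_monom 1 x) (series_monom 0 y) n = ad_exp_series x y n" for n
    by (simp add: exp_ad_def exp_ad_term_def ad_exp_series_def series_monom_def if_distrib sum.delta
      cong: if_cong)
qed

lemma series_br_diff_derivation:
  assumes "\<And>y z. \<Phi> (br y z) = series_br (\<Phi> y) (\<Phi> z)"
    and "\<And>y z. \<Psi> (br y z) = series_br (\<Psi> y) (\<Psi> z)"
    and "\<And>y. \<Phi> y 0 = y"
    and agree: "\<And>y m. m < n \<Longrightarrow> \<Phi> y m = \<Psi> y m"
    and "0 < n"
  shows "\<Phi> (br y z) n - \<Psi> (br y z) n = br y (\<Phi> z n - \<Psi> z n) + br (\<Phi> y n - \<Psi> y n) z"
proof -
  have \<Psi>0: "\<Psi> y 0 = y" for y using assms(3,5) agree[of 0] by simp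
  have "\<Phi> (br y z) n - \<Psi> (br y z) n
      = (\<Sum>i\<le>n. br (\<Phi> y i) (\<Phi> z (n - i)) - br (\<Psi> y i) (\<Psi> z (n - i)))"
    by (simp add: assms(1,2) series_br_def sum_subtractf)
  also have "\<dots> = (\<Sum>i\<le>n. (if i = 0 then br y (\<Phi> z n - \<Psi> z n) else 0)
                          + (if i = n then br (\<Phi> y n - \<Psi> y n) z else 0))"
  proof (intro sum.cong refl)
    fix i assume "i \<in> {..n}"
    then consider "i = 0" | "i = n" | "0 < i" "i < n" by fastforce
    then show "br (\<Phi> y i) (\<Phi> z (n - i)) - br (\<Psi> y i) (\<Psi> z (n - i))
        = (if i = 0 then br y (\<Phi> z n - \<Psi> z n) else 0) + (if i = n then br (\<Phi> y n - \<Psi> y n) z else 0)"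
      by cases (use assms(3,5) \<Psi>0 agree in auto)
  qed
  also have "\<dots> = br y (\<Phi> z n - \<Psi> z n) + br (\<Phi> y n - \<Psi> y n) z"
    using assms(5) by (simp add: sum.distrib)
  finally show ?thesis .
qed

text \<open>The degree-\<open>n\<close> coefficient of \<open>exp(ad d) u\<close> when \<open>d\<close> has no terms of degree \<open>0\<close> and \<open>1\<close>:
  a product \<open>ad (d l\<^sub>1) \<dots> ad (d l\<^sub>k)\<close> only contributes for \<open>l\<^sub>i \<ge> 2\<close>.\<close>
definition exp_ad_expansion :: "(nat \<Rightarrow> 'a) \<Rightarrow> (nat \<Rightarrow> 'a) \<Rightarrow> nat \<Rightarrow> 'a" where
  "exp_ad_expansion d u n =
     (\<Sum>k\<le>n. (1 / fact k) *\<^sub>R (\<Sum>ls\<in>tuples_ge2 k n. foldr br (map d ls) (u (n - sum_list ls))))"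

lemma exp_ad_expansion_0 [simp]: "exp_ad_expansion d u 0 = u 0"
  by (simp add: exp_ad_expansion_def tuples_ge2_0)

lemma series_br_funpow_eq_sum_tuples_ge2:
  assumes "d 0 = 0" "d 1 = 0"
  shows "(series_br d ^^ k) u n = (\<Sum>ls\<in>tuples_ge2 k n. foldr br (map d ls) (u (n - sum_list ls)))"
proof (induction k arbitrary: n)
  case 0
  then show ?case by (simp add: tuples_ge2_0)
next
  case (Suc k)
  have "(series_br d ^^ Suc k) u n = (\<Sum>i\<le>n. br (d i) ((series_br d ^^ k) u (n - i)))"
    by (simp add: series_br_def)
  also have "\<dots> = (\<Sum>i\<in>{2..n}. br (d i) ((series_br d ^^ k) u (n - i)))"
    by (rule sum.mono_neutral_right) (use assms in \<open>auto simp: not_le less_2_cases_iff\<close>)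
  also have "\<dots> = (\<Sum>(i, ls)\<in>(SIGMA i:{2..n}. tuples_ge2 k (n - i)).
                     foldr br (map d (i # ls)) (u (n - sum_list (i # ls))))"
    by (simp add: Suc.IH br_sum_right diff_diff_add sum.Sigma finite_tuples_ge2)
  also have "\<dots> = (\<Sum>ls\<in>tuples_ge2 (Suc k) n. foldr br (map d ls) (u (n - sum_list ls)))"
    unfolding tuples_ge2_Suc by (subst sum.reindex) (auto simp: inj_on_def case_prod_beta)
  finally show ?case .
qed

lemma exp_ad_eq_expansion: "d 0 = 0 \<Longrightarrow> d 1 = 0 \<Longrightarrow> exp_ad d u n = exp_ad_expansion d u n"
  by (simp add: exp_ad_def exp_ad_term_def exp_ad_expansion_def series_br_funpow_eq_sum_tuples_ge2)

lemma exp_ad_expansion_cong: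
  assumes "\<And>l. 2 \<le> l \<Longrightarrow> l \<le> n \<Longrightarrow> d l = d' l"
  shows "exp_ad_expansion d u n = exp_ad_expansion d' u n"
proof -
  have foldr_eq: "foldr br (map d ls) v = foldr br (map d' ls) v" if "ls \<in> tuples_ge2 k n" for k ls v
  proof -
    have "map d ls = map d' ls"
      using that assms member_le_sum_list[of _ ls] by (auto simp: tuples_ge2_def intro: order_trans)
    then show ?thesis by (simp only:)
  qed
  show ?thesis unfolding exp_ad_expansion_def
    by (rule sum.cong[OF refl], rule arg_cong[where f="scaleR _"], rule sum.cong[OF refl], erule foldr_eq)
qed

text \<open>Only the tuple \<open>[n]\<close> involves \<open>d n\<close>.\<close>
lemma exp_ad_expansion_change_top:
  assumes "\<And>l. 2 \<le> l \<Longrightarrow> l < n \<Longrightarrow> d l = d' l" and "2 \<le> n"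
  shows "exp_ad_expansion d u n = exp_ad_expansion d' u n + br (d n - d' n) (u 0)"
proof -
  define \<Delta> where "\<Delta> = br (d n - d' n) (u 0)"
  have "foldr br (map d ls) (u (n - sum_list ls)) - foldr br (map d' ls) (u (n - sum_list ls))
      = (if ls = [n] then \<Delta> else 0)" if "ls \<in> tuples_ge2 k n" for k ls
  proof (cases "ls = [n]")
    case False
    have "map d ls = map d' ls"
      using tuples_ge2_less[OF that False] assms(1) that by (auto simp: tuples_ge2_def)
    then have "foldr br (map d ls) (u (n - sum_list ls)) = foldr br (map d' ls) (u (n - sum_list ls))"
      by (simp only:)
    with False show ?thesis by simp
  qed (simp add: \<Delta>_def)
  then have "exp_ad_expansion d u n - exp_ad_expansion d' u n
      = (\<Sum>k\<le>n. (1 / fact k) *\<^sub>R (\<Sum>ls\<in>tuples_ge2 k n. if ls = [n] then \<Delta> else 0))"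
    unfolding exp_ad_expansion_def by (simp add: sum_subtractf[symmetric] scaleR_diff_right[symmetric])
  also have "\<dots> = (\<Sum>k\<le>n. if k = 1 then \<Delta> else 0)"
  proof (intro sum.cong refl)
    fix k
    have "[n] \<in> tuples_ge2 k n \<longleftrightarrow> k = 1" using assms(2) by (auto simp: tuples_ge2_def)
    then show "(1 / fact k) *\<^sub>R (\<Sum>ls\<in>tuples_ge2 k n. if ls = [n] then \<Delta> else 0) = (if k = 1 then \<Delta> else 0)"
      by (simp add: sum.delta[OF finite_tuples_ge2])
  qed
  also have "\<dots> = \<Delta>" using assms(2) by (simp add: sum.delta)
  finally show ?thesis unfolding \<Delta>_def by (simp add: algebra_simps)
qed

lemma A0_sum_eq_exp_ad_expansion:
  "A0 br (replicate n x) y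
     + (\<Sum>k=1..n div 2. \<Sum>ls\<in>{ls. length ls = k \<and> (\<forall>l\<in>set ls. 2 \<le> l) \<and> sum_list ls \<le> n}.
          A0 br (map e ls) (A0 br (replicate (n - sum_list ls) x) y))
   = exp_ad_expansion e (ad_exp_series x y) n"
proof -
  define u where "u = ad_exp_series x y"
  have u: "u m = A0 br (replicate m x) y" for m
    by (simp add: u_def ad_exp_series_def A0_replicate)
  define T where "T k = (1 / fact k) *\<^sub>R (\<Sum>ls\<in>tuples_ge2 k n. foldr br (map e ls) (u (n - sum_list ls)))" for k
  have T: "T k = (\<Sum>ls\<in>tuples_ge2 k n. A0 br (map e ls) (A0 br (replicate (n - sum_list ls) x) y))" for k
    using sum_tuples_ge2_A0[where k=k and n=n and e=e and w="\<lambda>s. u (n - s)"] by (simp add: T_def u)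
  have "exp_ad_expansion e u n = (\<Sum>k\<le>n div 2. T k)"
    unfolding exp_ad_expansion_def T_def
    by (rule sum.mono_neutral_right) (auto simp: tuples_ge2_eq_empty)
  also have "\<dots> = T 0 + (\<Sum>k=1..n div 2. T k)"
    by (simp add: atMost_atLeast0 sum.atLeast_Suc_atMost)
  also have "T 0 = A0 br (replicate n x) y"
    by (simp add: T_def tuples_ge2_0 u)
  finally show ?thesis by (simp add: u_def T tuples_ge2_def)
qed

text \<open>A multilinear map whose diagonal \<open>(x, \<dots>, x, y)\<close> is \<open>exp_ad_expansion\<close>: each tuple
  \<open>ls\<close> becomes the nested bracket of the \<open>d l\<close>, \<open>l \<in> ls\<close>, followed by \<open>n - sum_list ls\<close>
  one-argument brackets, which become the powers of \<open>ad x\<close>.\<close>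
definition expansion_map :: "(nat \<Rightarrow> 'a list \<Rightarrow> 'a) \<Rightarrow> nat \<Rightarrow> 'a list \<Rightarrow> 'a" where
  "expansion_map d n zs = (\<Sum>k\<le>n. (1 / fact k) *\<^sub>R (\<Sum>ls\<in>tuples_ge2 k n.
     (1 / fact (n - sum_list ls)) *\<^sub>R
       nested_bracket (map (\<lambda>l. (l, d l)) ls @ replicate (n - sum_list ls) (1, hd)) zs))"

lemma foldr_br_scaleR: "foldr br L (c *\<^sub>R w) = c *\<^sub>R foldr br L w"
  by (induction L) auto

lemma nested_bracket_expansion_term:
  "nested_bracket (map (\<lambda>l. (l, d l)) ls @ replicate m (1, hd)) (replicate (sum_list ls + m) x @ [y])
     = foldr br (map (\<lambda>l. d l (replicate l x)) ls) ((br x ^^ m) y)"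
  using nested_bracket_replicate_append[of "map (\<lambda>l. (l, d l)) ls @ replicate m (1, hd)" x y]
  by (simp add: comp_def sum_list_replicate)

lemma expansion_map_replicate_append:
  "expansion_map d n (replicate n x @ [y])
     = exp_ad_expansion (\<lambda>l. d l (replicate l x)) (ad_exp_series x y) n"
  unfolding expansion_map_def exp_ad_expansion_def ad_exp_series_def
proof (intro sum.cong refl arg_cong[where f="\<lambda>v. _ *\<^sub>R v"])
  fix k ls assume "ls \<in> tuples_ge2 k n"
  then have "replicate n x = replicate (sum_list ls + (n - sum_list ls)) x"
    by (simp add: tuples_ge2_def)
  then show "(1 / fact (n - sum_list ls)) *\<^sub>R
      nested_bracket (map (\<lambda>l. (l, d l)) ls @ replicate (n - sum_list ls) (1, hd)) (replicate n x @ [y])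
    = foldr br (map (\<lambda>l. d l (replicate l x)) ls) ((1 / fact (n - sum_list ls)) *\<^sub>R (br x ^^ (n - sum_list ls)) y)"
    by (simp only: nested_bracket_expansion_term foldr_br_scaleR)
qed

lemma multilinear_expansion_map:
  assumes "\<And>l. multilinear l (d l)"
  shows "multilinear (n + 1) (expansion_map d n)"
proof -
  have "multilinear (n + 1) (nested_bracket (map (\<lambda>l. (l, d l)) ls @ replicate (n - sum_list ls) (1, hd)))"
    if "ls \<in> tuples_ge2 k n" for k ls
    using multilinear_nested_bracket[of "map (\<lambda>l. (l, d l)) ls @ replicate (n - sum_list ls) (1, hd)"]
      that assms multilinear_hd
    by (auto simp: tuples_ge2_def comp_def sum_list_replicate)
  then show ?thesis unfolding expansion_map_def
    by (intro multilinear_sum multilinear_scaleR finite_tuples_ge2 finite_atMost) auto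
qed

end

locale left_leibniz_algebra = bilinear_bracket +
  assumes leibniz: "\<And>u v w. br u (br v w) = br (br u v) w + br v (br u w)"
begin

lemma invariant_bracket_split:
  assumes F: "invariant br p F" and G: "invariant br q G"
  shows "invariant br (p + q) (bracket_split p F G)"
  unfolding invariant_def
proof (intro allI impI)
  fix x :: 'a and ys :: "'a list" assume len: "length ys = p + q"
  have "br x (bracket_split p F G ys) = br (br x (F (take p ys))) (G (drop p ys))
      + br (F (take p ys)) (br x (G (drop p ys)))"
    unfolding bracket_split_def by (rule leibniz)
  also have "br x (F (take p ys)) = (\<Sum>i<p. F ((take p ys)[i := br x (take p ys ! i)]))"
    using F len unfolding invariant_def by simp
  also have "br x (G (drop p ys)) = (\<Sum>j<q. G ((drop p ys)[j := br x (drop p ys ! j)]))"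
    using G len unfolding invariant_def by simp
  also have "br (\<Sum>i<p. F ((take p ys)[i := br x (take p ys ! i)])) (G (drop p ys))
     = (\<Sum>i<p. bracket_split p F G (ys[i := br x (ys ! i)]))"
    by (auto simp: br_sum_left bracket_split_def take_update_swap intro!: sum.cong)
  also have "br (F (take p ys)) (\<Sum>j<q. G ((drop p ys)[j := br x (drop p ys ! j)]))
     = (\<Sum>j<q. bracket_split p F G (ys[p + j := br x (ys ! (p + j))]))"
    using len by (auto simp: br_sum_right bracket_split_def drop_update_swap intro!: sum.cong)
  finally show "br x (bracket_split p F G ys) = (\<Sum>i<p + q. bracket_split p F G (ys[i := br x (ys ! i)]))"
    by (simp add: sum_lessThan_add)
qed

lemma invariant_nested_bracket:
  assumes "\<And>l F. (l, F) \<in> set fs \<Longrightarrow> invariant br l F"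
  shows "invariant br (sum_list (map fst fs) + 1) (nested_bracket fs)"
  using assms
proof (induction fs)
  case Nil
  then show ?case using invariant_hd by simp
next
  case (Cons lF fs)
  obtain l F where lF: "lF = (l, F)" by fastforce
  have "invariant br (l + (sum_list (map fst fs) + 1)) (bracket_split l F (nested_bracket fs))"
    using Cons lF by (intro invariant_bracket_split) auto
  then show ?case using lF by (simp add: add.assoc)
qed

lemma invariant_expansion_map:
  assumes "\<And>l. invariant br l (d l)"
  shows "invariant br (n + 1) (expansion_map d n)"
proof -
  have "invariant br (n + 1) (nested_bracket (map (\<lambda>l. (l, d l)) ls @ replicate (n - sum_list ls) (1, hd)))"
    if "ls \<in> tuples_ge2 k n" for k ls
    using invariant_nested_bracket[of "map (\<lambda>l. (l, d l)) ls @ replicate (n - sum_list ls) (1, hd)"]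
      that assms invariant_hd
    by (auto simp: tuples_ge2_def comp_def sum_list_replicate)
  then show ?thesis unfolding expansion_map_def
    by (intro invariant_sum invariant_scaleR finite_tuples_ge2 finite_atMost) auto
qed

lemma sum_Leibniz_rule_step:
  fixes f :: "nat \<Rightarrow> nat \<Rightarrow> 'a::real_vector"
  shows "(\<Sum>j\<le>k. real (Suc j) *\<^sub>R f (Suc j) (k - j) + real (Suc (k - j)) *\<^sub>R f j (Suc k - j))
       = real (Suc k) *\<^sub>R (\<Sum>j\<le>Suc k. f j (Suc k - j))"
proof -
  have "(\<Sum>j\<le>k. real (Suc j) *\<^sub>R f (Suc j) (k - j)) = (\<Sum>j\<le>Suc k. real j *\<^sub>R f j (Suc k - j))"
    by (simp add: sum.atMost_Suc_shift del: sum.atMost_Suc)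
  moreover have "(\<Sum>j\<le>k. real (Suc (k - j)) *\<^sub>R f j (Suc k - j))
      = (\<Sum>j\<le>Suc k. (real (Suc k) - real j) *\<^sub>R f j (Suc k - j))"
    by (simp del: of_nat_Suc) (intro sum.cong refl, simp add: of_nat_diff)
  ultimately have "(\<Sum>j\<le>k. real (Suc j) *\<^sub>R f (Suc j) (k - j) + real (Suc (k - j)) *\<^sub>R f j (Suc k - j))
      = (\<Sum>j\<le>Suc k. real j *\<^sub>R f j (Suc k - j)) + (\<Sum>j\<le>Suc k. (real (Suc k) - real j) *\<^sub>R f j (Suc k - j))"
    by (simp only: sum.distrib)
  also have "\<dots> = real (Suc k) *\<^sub>R (\<Sum>j\<le>Suc k. f j (Suc k - j))"
    by (simp add: sum.distrib[symmetric] scaleR_sum_right scaleR_add_left[symmetric]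
      del: of_nat_Suc sum.atMost_Suc)
  finally show ?thesis .
qed

lemma series_br_leibniz: "series_br d (series_br u v) n = series_br (series_br d u) v n + series_br u (series_br d v) n"
proof -
  have "series_br d (series_br u v) n = (\<Sum>i\<le>n. \<Sum>j\<le>n-i. br (br (d i) (u j)) (v (n - i - j)))
      + (\<Sum>i\<le>n. \<Sum>j\<le>n-i. br (u j) (br (d i) (v (n - i - j))))"
  proof -
    have "br (d i) (br (u j) (v k)) = br (br (d i) (u j)) (v k) + br (u j) (br (d i) (v k))" for i j k
      by (rule leibniz)
    then show ?thesis
      unfolding series_br_def br_sum_right by (simp only: sum.distrib diff_diff_left)
  qed
  also have "(\<Sum>i\<le>n. \<Sum>j\<le>n-i. br (br (d i) (u j)) (v (n - i - j))) = series_br (series_br d u) v n"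
    unfolding series_br_def br_sum_left
    using sum_triangle_assoc[of "\<lambda>i j k. br (br (d i) (u j)) (v k)" n] by simp
  also have "(\<Sum>i\<le>n. \<Sum>j\<le>n-i. br (u j) (br (d i) (v (n - i - j)))) = series_br u (series_br d v) n"
    unfolding series_br_def br_sum_right
    using sum_triangle_swap[of "\<lambda>i j. br (u j) (br (d i) (v (n - i - j)))" n]
    by (simp add: diff_commute add.commute)
  finally show ?thesis .
qed

lemma series_br_exp_ad_term: "series_br d (exp_ad_term d j u) n = real (Suc j) *\<^sub>R exp_ad_term d (Suc j) u n"
proof -
  have "series_br d (exp_ad_term d j u) n = (1 / fact j) *\<^sub>R (series_br d ^^ Suc j) u n"
    unfolding exp_ad_term_def by (simp add: series_br_scaleR_right)
  also have "(1 / fact j) = real (Suc j) * (1 / fact (Suc j) :: real)"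
    by (simp add: fact_Suc del: of_nat_Suc)
  finally show ?thesis by (simp add: exp_ad_term_def)
qed

lemma exp_ad_term_series_br:
  "exp_ad_term d k (series_br u v) n = (\<Sum>j\<le>k. series_br (exp_ad_term d j u) (exp_ad_term d (k - j) v) n)"
proof (induction k arbitrary: n)
  case 0
  then show ?case by (simp add: exp_ad_term_def)
next
  case (Suc k)
  define f where "f a b = series_br (exp_ad_term d a u) (exp_ad_term d b v) n" for a b
  have d_term: "series_br d (exp_ad_term d i w) = (\<lambda>m. real (Suc i) *\<^sub>R exp_ad_term d (Suc i) w m)" for w i
    by (rule ext) (rule series_br_exp_ad_term)
  have "exp_ad_term d (Suc k) (series_br u v) n
      = (1 / real (Suc k)) *\<^sub>R series_br d (exp_ad_term d k (series_br u v)) n"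
    by (simp add: exp_ad_term_def series_br_scaleR_right)
  also have "series_br d (exp_ad_term d k (series_br u v)) n
      = (\<Sum>j\<le>k. series_br d (series_br (exp_ad_term d j u) (exp_ad_term d (k - j) v)) n)"
  proof -
    have "exp_ad_term d k (series_br u v)
        = (\<lambda>n. \<Sum>j\<le>k. series_br (exp_ad_term d j u) (exp_ad_term d (k - j) v) n)"
      using Suc.IH by (rule ext)
    then show ?thesis by (simp only: series_br_sum_right)
  qed
  also have "\<dots> = (\<Sum>j\<le>k. real (Suc j) *\<^sub>R f (Suc j) (k - j) + real (Suc (k - j)) *\<^sub>R f j (Suc k - j))"
    by (intro sum.cong refl)
       (simp only: series_br_leibniz d_term series_br_scaleR_left series_br_scaleR_right f_def;
        simp add: Suc_diff_le)
  also have "\<dots> = real (Suc k) *\<^sub>R (\<Sum>j\<le>Suc k. f j (Suc k - j))"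
    by (rule sum_Leibniz_rule_step)
  finally show ?case by (simp add: f_def)
qed

text \<open>The exponential of the derivation \<open>series_br d\<close> is an automorphism; \<open>d 0 = 0\<close> makes
  \<open>series_br d\<close> raise degrees, so the finite sum defining \<open>exp_ad\<close> is the full exponential.\<close>
lemma exp_ad_series_br:
  assumes d0: "d 0 = 0"
  shows "exp_ad d (series_br u v) n = series_br (exp_ad d u) (exp_ad d v) n"
proof -
  define f where "f j m = series_br (exp_ad_term d j u) (exp_ad_term d m v) n" for j m
  have f_0: "f j m = 0" if "n < j + m" for j m
  proof -
    have "br (exp_ad_term d j u i) (exp_ad_term d m v (n - i)) = 0" if "i \<le> n" for i
    proof (cases "i < j")
      case False
      then have "n - i < m" using \<open>n < j + m\<close> \<open>i \<le> n\<close> by arith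
      then show ?thesis by (simp add: exp_ad_term_below[of d, OF d0])
    qed (simp add: exp_ad_term_below[of d, OF d0])
    then show ?thesis unfolding f_def series_br_def by (intro sum.neutral) auto
  qed
  have "exp_ad d (series_br u v) n = (\<Sum>k\<le>n. \<Sum>j\<le>k. f j (k - j))"
    unfolding exp_ad_def f_def by (simp add: exp_ad_term_series_br)
  also have "\<dots> = (\<Sum>j\<le>n. \<Sum>m\<le>n-j. f j m)"
    using sum.triangle_reindex_eq[of f n] by (simp add: sum_triangle_Sigma)
  also have "\<dots> = (\<Sum>j\<le>n. \<Sum>m\<le>n. f j m)"
    by (intro sum.cong refl sum.mono_neutral_left) (auto intro!: f_0)
  also have "\<dots> = series_br (\<lambda>i. \<Sum>j\<le>n. exp_ad_term d j u i) (\<lambda>i. \<Sum>m\<le>n. exp_ad_term d m v i) n"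
    by (simp add: f_def series_br_sum_left series_br_sum_right)
  also have "\<dots> = series_br (exp_ad d u) (exp_ad d v) n"
    by (intro series_br_cong) (simp_all add: exp_ad_eq_sum[of d, OF d0])
  finally show ?thesis .
qed

lemma exp_ad_monom_0_br:
  assumes "d 0 = 0"
  shows "exp_ad d (series_monom 0 (br y z)) = series_br (exp_ad d (series_monom 0 y)) (exp_ad d (series_monom 0 z))"
  using exp_ad_series_br[of d, OF assms] by (auto simp: series_br_monom_0[symmetric])

end

section \<open>Trivial center: inverting \<open>ad\<close>\<close>

locale centerless_leibniz_algebra = left_leibniz_algebra br for br :: "'a::euclidean_space \<Rightarrow> 'a \<Rightarrow> 'a" +
  assumes H0: "H0_zero br"
begin

lemma br_left_eq_0: "(\<And>m. br c m = 0) \<Longrightarrow> c = 0"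
  using H0 unfolding H0_zero_def by blast

lemma br_left_cancel: "(\<And>m. br c m = br c' m) \<Longrightarrow> c = c'"
  using br_left_eq_0[of "c - c'"] by simp

text \<open>\<open>c\<close> depends linearly on the values \<open>br c a\<close>, \<open>a \<in> Basis\<close>: with \<open>R a = (\<lambda>c. br c a)\<close>,
  the operator \<open>\<Sum>a. (R a)\<^sup>* (R a)\<close> is injective because the center is trivial, so it has a
  linear left inverse.\<close>
lemma linear_recovery_from_br_Basis:
  "\<exists>z. (\<forall>a. linear (z a)) \<and> (\<forall>c. (\<Sum>a\<in>Basis. z a (br c a)) = c)"
proof -
  define M where "M c = (\<Sum>a\<in>Basis. adjoint (\<lambda>c. br c a) (br c a))" for c
  have adj: "c' \<bullet> adjoint (\<lambda>c. br c a) v = br c' a \<bullet> v" for c' a v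
    using adjoint_works[OF linear_br_left] .
  have lin_adj: "linear (adjoint (\<lambda>c. br c a))" for a
    by (rule adjoint_linear[OF linear_br_left])
  have "linear M"
    unfolding M_def using linear_compose[OF linear_br_left lin_adj]
    by (intro linear_compose_sum) (simp add: o_def)
  moreover have "c = 0" if "M c = 0" for c
  proof -
    have "c \<bullet> M c = (\<Sum>a\<in>Basis. br c a \<bullet> br c a)"
      by (simp add: M_def inner_sum_right adj)
    then have "br c a = 0" if "a \<in> Basis" for a
      using \<open>M c = 0\<close> that by (simp add: sum_nonneg_eq_0_iff)
    then have "br c m = 0" for m
    proof -
      have "br c m = br c (\<Sum>a\<in>Basis. (m \<bullet> a) *\<^sub>R a)" by (simp add: euclidean_representation)
      also have "\<dots> = 0" by (simp add: br_sum_right \<open>\<And>a. a \<in> Basis \<Longrightarrow> br c a = 0\<close>)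
      finally show ?thesis .
    qed
    then show "c = 0" by (rule br_left_eq_0)
  qed
  ultimately obtain g where g: "linear g" "g \<circ> M = id"
    using linear_injective_left_inverse linear_injective_0 by metis
  show ?thesis
  proof (intro exI[of _ "\<lambda>a. g \<circ> adjoint (\<lambda>c. br c a)"] conjI allI)
    show "linear (g \<circ> adjoint (\<lambda>c. br c a))" for a
      by (rule linear_compose[OF lin_adj g(1)])
    show "(\<Sum>a\<in>Basis. (g \<circ> adjoint (\<lambda>c. br c a)) (br c a)) = c" for c
      using pointfree_idE[OF g(2), of c] by (simp add: M_def linear_sum[OF g(1)])
  qed
qed

definition ad_recovery :: "'a \<Rightarrow> 'a \<Rightarrow> 'a" where
  "ad_recovery = (SOME z. (\<forall>a. linear (z a)) \<and> (\<forall>c. (\<Sum>a\<in>Basis. z a (br c a)) = c))"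

definition ad_inv :: "('a \<Rightarrow> 'a) \<Rightarrow> 'a" where
  "ad_inv F = (\<Sum>a\<in>Basis. ad_recovery a (F a))"

lemma linear_ad_recovery: "linear (ad_recovery a)"
  and sum_ad_recovery_br: "(\<Sum>a\<in>Basis. ad_recovery a (br c a)) = c"
  using someI_ex[OF linear_recovery_from_br_Basis] unfolding ad_recovery_def by blast+

lemma ad_inv_br [simp]: "ad_inv (br c) = c"
  by (simp add: ad_inv_def sum_ad_recovery_br)

lemma multilinear_ad_inv:
  "(\<And>y. multilinear n (\<lambda>xs. V xs y)) \<Longrightarrow> multilinear n (\<lambda>xs. ad_inv (V xs))"
  unfolding ad_inv_def
  by (intro multilinear_sum finite_Basis) (rule multilinear_compose_linear[OF _ linear_ad_recovery])

lemma derivation_eq_br_ad_inv: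
  assumes "H1_zero br" "linear F" "\<And>y z. F (br y z) = br y (F z) + br (F y) z"
  shows "F = br (ad_inv F)"
proof -
  have "F \<in> derivations br"
    using assms(2,3) unfolding derivations_def by (auto simp: add.commute)
  then obtain c where "F = br c"
    using assms(1) unfolding H1_zero_def inner_derivations_def by blast
  then show ?thesis by simp
qed

lemma invariant_of_br_invariant:
  assumes W: "invariant br (Suc n) W" and WB: "\<And>xs y. length xs = n \<Longrightarrow> W (xs @ [y]) = br (B xs) y"
  shows "invariant br n B"
  unfolding invariant_def
proof (intro allI impI)
  fix x ys assume len: "length (ys :: 'a list) = n"
  have "br (br x (B ys)) m = br (\<Sum>i<n. B (ys[i := br x (ys ! i)])) m" for m
  proof -
    have "br x (W (ys @ [m])) = (\<Sum>i<Suc n. W ((ys @ [m])[i := br x ((ys @ [m]) ! i)]))"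
      using W len unfolding invariant_def by simp
    also have "\<dots> = (\<Sum>i<n. W (ys[i := br x (ys ! i)] @ [m])) + W (ys @ [br x m])"
      using len by (simp add: list_update_append nth_append)
    finally have "br x (br (B ys) m) = (\<Sum>i<n. br (B (ys[i := br x (ys ! i)])) m) + br (B ys) (br x m)"
      using len by (simp add: WB)
    then show ?thesis
      using leibniz[of x "B ys" m] by (simp add: br_sum_left algebra_simps)
  qed
  then show "br x (B ys) = (\<Sum>i<n. B (ys[i := br x (ys ! i)]))"
    by (rule br_left_cancel)
qed

text \<open>Uniqueness: the expansion determines the diagonal of each \<open>B n\<close> through its top term
  \<open>br (B n (x, \<dots>, x)) y\<close>, and polarization then determines \<open>B n\<close>.\<close>
lemma exp_ad_expansion_determines:
  fixes B B' :: "nat \<Rightarrow> 'a list \<Rightarrow> 'a"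
  assumes B: "\<forall>n\<ge>2. multilinear n (B n) \<and> symmetric_map n (B n)"
    and B': "\<forall>n\<ge>2. multilinear n (B' n) \<and> symmetric_map n (B' n)"
    and eq: "\<forall>n\<ge>2. \<forall>x y. exp_ad_expansion (\<lambda>l. B l (replicate l x)) (u x y) n
                          = exp_ad_expansion (\<lambda>l. B' l (replicate l x)) (u x y) n"
    and u0: "\<And>x y. u x y 0 = y"
  shows "\<forall>n\<ge>2. \<forall>xs. length xs = n \<longrightarrow> B n xs = B' n xs"
proof (intro allI impI)
  fix n and xs :: "'a list" assume "2 \<le> n" "length xs = n"
  then show "B n xs = B' n xs"
  proof (induction n arbitrary: xs rule: less_induct)
    case (less n)
    have diag: "B n (replicate n x) = B' n (replicate n x)" for x
    proof (rule br_left_cancel)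
      fix y
      have "exp_ad_expansion (\<lambda>l. B l (replicate l x)) (u x y) n
          = exp_ad_expansion (\<lambda>l. B' l (replicate l x)) (u x y) n
            + br (B n (replicate n x) - B' n (replicate n x)) (u x y 0)"
        by (rule exp_ad_expansion_change_top) (use less in auto)
      then show "br (B n (replicate n x)) y = br (B' n (replicate n x)) y"
        using eq less.prems(1) u0 by simp
    qed
    have "B n xs - B' n xs = 0"
      by (rule symmetric_multilinear_eq_0[where G="\<lambda>xs. B n xs - B' n xs"])
         (use B B' less.prems diag in \<open>auto simp: symmetric_map_def intro: multilinear_diff\<close>)
    then show ?case by simp
  qed
qed

end

section \<open>Construction of the \<open>B_n\<close>\<close>

locale leibniz_deformation = centerless_leibniz_algebra +
  fixes A :: "nat \<Rightarrow> 'a list \<Rightarrow> 'a"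
  assumes H1: "H1_zero br"
    and A1: "\<And>x y. A 1 [x, y] = br x y"
    and A_multi: "\<And>n. n \<ge> 2 \<Longrightarrow> multilinear (n + 1) (A n)"
    and A_inv: "\<And>n. n \<ge> 2 \<Longrightarrow> invariant br (n + 1) (A n)"
    and A_rec: "\<And>p x y z. p \<ge> 1 \<Longrightarrow>
        diag p (A p) x (br y z) =
          br y (diag p (A p) x z) + br (diag p (A p) x y) z
          + (\<Sum>r=1..p-1. br (diag r (A r) x y) (diag (p - r) (A (p - r)) x z))"
begin

definition A_series :: "'a \<Rightarrow> 'a \<Rightarrow> nat \<Rightarrow> 'a" where
  "A_series x y n = (if n = 0 then y else diag n (A n) x y)"

lemma A_series_br: "A_series x (br y z) = series_br (A_series x y) (A_series x z)"
proof
  fix n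
  show "A_series x (br y z) n = series_br (A_series x y) (A_series x z) n"
  proof (cases n)
    case (Suc m)
    have "A_series x (br y z) n = diag (Suc m) (A (Suc m)) x (br y z)"
      using Suc by (simp add: A_series_def)
    also have "\<dots> = br y (A_series x z (Suc m))
        + (\<Sum>r=1..Suc m - 1. br (diag r (A r) x y) (diag (Suc m - r) (A (Suc m - r)) x z))
        + br (A_series x y (Suc m)) z"
      using A_rec[of "Suc m" x y z] by (simp add: A_series_def algebra_simps)
    also have "(\<Sum>r=1..Suc m - 1. br (diag r (A r) x y) (diag (Suc m - r) (A (Suc m - r)) x z))
        = (\<Sum>i<m. br (A_series x y (Suc i)) (A_series x z (Suc m - Suc i)))"
      by (simp add: sum.atLeast1_atMost_eq A_series_def)
    also have "br y (A_series x z (Suc m)) + (\<Sum>i<m. br (A_series x y (Suc i)) (A_series x z (Suc m - Suc i)))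
        + br (A_series x y (Suc m)) z = series_br (A_series x y) (A_series x z) n"
      unfolding series_br_def Suc sum.atMost_Suc_shift
      by (simp add: A_series_def lessThan_Suc_atMost[symmetric])
    finally show ?thesis .
  qed (simp add: A_series_def series_br_def)
qed

text \<open>\<open>A n\<close> minus the part of the expansion already fixed by the \<open>d l\<close>, \<open>l < n\<close>; symmetrizing
  makes the hypothesis that \<open>A n\<close> is symmetric in its first \<open>n\<close> arguments unnecessary.\<close>
definition defect :: "(nat \<Rightarrow> 'a list \<Rightarrow> 'a) \<Rightarrow> nat \<Rightarrow> 'a list \<Rightarrow> 'a" where
  "defect d n = symmetrize n (\<lambda>ws. A n ws - expansion_map d n ws)"

lemma multilinear_defect:
  "(\<And>l. multilinear l (d l)) \<Longrightarrow> 2 \<le> n \<Longrightarrow> multilinear (n + 1) (defect d n)"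
  unfolding defect_def
  by (intro multilinear_symmetrize multilinear_diff A_multi multilinear_expansion_map) auto

lemma invariant_defect:
  "(\<And>l. invariant br l (d l)) \<Longrightarrow> 2 \<le> n \<Longrightarrow> invariant br (n + 1) (defect d n)"
  unfolding defect_def
  by (intro invariant_symmetrize invariant_diff A_inv invariant_expansion_map) auto

lemma defect_permute_list:
  "length xs = n \<Longrightarrow> \<sigma> permutes {..<n} \<Longrightarrow> defect d n (permute_list \<sigma> xs @ [y]) = defect d n (xs @ [y])"
  unfolding defect_def
  by (metis le_add1 length_append permute_list_append symmetrize_permute_list)

lemma defect_replicate_append:
  "0 < n \<Longrightarrow> defect d n (replicate n x @ [y])
     = A_series x y n - exp_ad_expansion (\<lambda>l. d l (replicate l x)) (ad_exp_series x y) n"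
  unfolding defect_def symmetrize_replicate_append
  by (simp add: A_series_def diag_def expansion_map_replicate_append)

function B_rec :: "nat \<Rightarrow> 'a list \<Rightarrow> 'a" where
  "B_rec n xs =
     (if n < 2 then 0 else ad_inv (\<lambda>y. defect (\<lambda>l zs. if l < n then B_rec l zs else 0) n (xs @ [y])))"
  by pat_completeness auto
termination by (relation "Wellfounded.measure fst") auto

declare B_rec.simps [simp del]

definition B_below :: "nat \<Rightarrow> nat \<Rightarrow> 'a list \<Rightarrow> 'a" where
  "B_below n l zs = (if l < n then B_rec l zs else 0)"

lemma B_rec_less_2: "n < 2 \<Longrightarrow> B_rec n xs = 0"
  by (simp add: B_rec.simps)

lemma B_rec_eq_ad_inv: "2 \<le> n \<Longrightarrow> B_rec n xs = ad_inv (\<lambda>y. defect (B_below n) n (xs @ [y]))"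
  by (subst B_rec.simps) (simp add: B_below_def[abs_def])

lemma symmetric_B_rec: "2 \<le> n \<Longrightarrow> symmetric_map n (B_rec n)"
  unfolding symmetric_map_def by (simp add: B_rec_eq_ad_inv defect_permute_list)

context
  fixes n :: nat
  assumes n2: "2 \<le> n"
    and lower: "\<And>l. 2 \<le> l \<Longrightarrow> l < n \<Longrightarrow> multilinear l (B_rec l) \<and> invariant br l (B_rec l)"
    and expansion_below: "\<And>m x y. 0 < m \<Longrightarrow> m < n \<Longrightarrow>
      A_series x y m = exp_ad_expansion (\<lambda>l. B_rec l (replicate l x)) (ad_exp_series x y) m"
begin

lemma B_below_good: "multilinear l (B_below n l) \<and> invariant br l (B_below n l)"
proof (cases "2 \<le> l \<and> l < n")
  case False
  then have "B_below n l = (\<lambda>zs. 0)" by (auto simp: B_below_def B_rec_less_2)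
  then show ?thesis by (simp add: multilinear_zero invariant_zero)
qed (use lower in \<open>simp add: B_below_def[abs_def]\<close>)

lemma multilinear_defect_B_below: "multilinear (Suc n) (defect (B_below n) n)"
  using multilinear_defect[of "B_below n" n] B_below_good n2 by simp

lemma multilinear_B_rec: "multilinear n (B_rec n)"
  unfolding B_rec_eq_ad_inv[OF n2]
  by (rule multilinear_ad_inv[OF multilinear_snoc[OF multilinear_defect_B_below]])

text \<open>On the diagonal, the defect is the degree-\<open>n\<close> difference of two solutions of the
  multiplicativity equation, \<open>A_series\<close> and \<open>exp(ad B) exp(t ad x)\<close>, which agree below
  degree \<open>n\<close>; hence it is a derivation.\<close>
lemma defect_replicate_derivation:
  "defect (B_below n) n (replicate n x @ [br y z])
    = br y (defect (B_below n) n (replicate n x @ [z])) + br (defect (B_below n) n (replicate n x @ [y])) z"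
proof -
  define D where "D = (\<lambda>l. B_below n l (replicate l x))"
  define G where "G y = exp_ad D (ad_exp_series x y)" for y
  have D01: "D 0 = 0" "D 1 = 0" using n2 by (auto simp: D_def B_below_def B_rec_less_2)
  have G_eq: "G y = exp_ad_expansion D (ad_exp_series x y)" for y
    by (rule ext) (simp add: G_def exp_ad_eq_expansion[of D, OF D01])
  have x0: "series_monom 1 x 0 = 0" by (simp add: series_monom_def)
  have G_br: "G (br y z) = series_br (G y) (G z)" for y z
    unfolding G_def exp_ad_monom[symmetric] exp_ad_monom_0_br[of "series_monom 1 x", OF x0]
    by (rule ext) (rule exp_ad_series_br[of D, OF D01(1)])
  have agree: "A_series x y m = G y m" if "m < n" for y m
  proof (cases "m = 0")
    case False
    then have "A_series x y m = exp_ad_expansion (\<lambda>l. B_rec l (replicate l x)) (ad_exp_series x y) m"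
      using expansion_below[of m x y] that by simp
    also have "\<dots> = G y m"
      unfolding G_eq using that by (intro exp_ad_expansion_cong) (simp add: D_def B_below_def)
    finally show ?thesis .
  qed (simp add: A_series_def G_eq)
  have defect_eq: "defect (B_below n) n (replicate n x @ [w]) = A_series x w n - G w n" for w
    using n2 by (simp add: defect_replicate_append G_eq D_def)
  have "A_series x (br y z) n - G (br y z) n = br y (A_series x z n - G z n) + br (A_series x y n - G y n) z"
    by (rule series_br_diff_derivation[where \<Phi>="A_series x"])
       (use A_series_br G_br agree n2 in \<open>auto simp: A_series_def\<close>)
  then show ?thesis unfolding defect_eq .
qed

lemma br_B_rec_replicate: "br (B_rec n (replicate n x)) y = defect (B_below n) n (replicate n x @ [y])"
proof -
  define F where "F = (\<lambda>y. defect (B_below n) n (replicate n x @ [y]))"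
  have "linear F"
    unfolding F_def by (rule linear_last_of_multilinear[OF multilinear_defect_B_below]) simp
  then have "F = br (ad_inv F)"
  proof (rule derivation_eq_br_ad_inv[OF H1])
    show "F (br y z) = br y (F z) + br (F y) z" for y z
      unfolding F_def by (rule defect_replicate_derivation)
  qed
  then have "F y = br (ad_inv F) y" by (rule fun_cong)
  then show ?thesis by (simp only: F_def B_rec_eq_ad_inv[OF n2])
qed

lemma br_B_rec:
  assumes "length xs = n"
  shows "br (B_rec n xs) y = defect (B_below n) n (xs @ [y])"
proof -
  have "multilinear n (\<lambda>xs. br (B_rec n xs) y - defect (B_below n) n (xs @ [y]))"
    using multilinear_B_rec multilinear_defect_B_below
    by (intro multilinear_diff multilinear_snoc multilinear_compose_linear[OF _ linear_br_left])
  moreover have "symmetric_map n (\<lambda>xs. br (B_rec n xs) y - defect (B_below n) n (xs @ [y]))"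
    using symmetric_B_rec[OF n2] by (simp add: symmetric_map_def defect_permute_list)
  moreover have "br (B_rec n (replicate n x)) y - defect (B_below n) n (replicate n x @ [y]) = 0" for x
    using br_B_rec_replicate by simp
  ultimately have "br (B_rec n xs) y - defect (B_below n) n (xs @ [y]) = 0"
    using assms by (rule symmetric_multilinear_eq_0)
  then show ?thesis by simp
qed

lemma invariant_B_rec: "invariant br n (B_rec n)"
proof -
  have "invariant br (Suc n) (defect (B_below n) n)"
    using invariant_defect[of "B_below n" n] B_below_good n2 by simp
  then show ?thesis
    by (rule invariant_of_br_invariant) (rule br_B_rec[symmetric])
qed

lemma A_series_eq_exp_ad_expansion:
  "A_series x y n = exp_ad_expansion (\<lambda>l. B_rec l (replicate l x)) (ad_exp_series x y) n"
proof -
  have "exp_ad_expansion (\<lambda>l. B_rec l (replicate l x)) (ad_exp_series x y) n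
      = exp_ad_expansion (\<lambda>l. B_below n l (replicate l x)) (ad_exp_series x y) n + br (B_rec n (replicate n x)) y"
    using exp_ad_expansion_change_top[of n "\<lambda>l. B_rec l (replicate l x)" "\<lambda>l. B_below n l (replicate l x)"]
      n2 by (simp add: B_below_def)
  also have "br (B_rec n (replicate n x)) y = defect (B_below n) n (replicate n x @ [y])"
    by (rule br_B_rec_replicate)
  finally show ?thesis
    using n2 by (simp add: defect_replicate_append)
qed

end

lemma B_rec_solves:
  "(0 < n \<longrightarrow> (\<forall>x y. A_series x y n
      = exp_ad_expansion (\<lambda>l. B_rec l (replicate l x)) (ad_exp_series x y) n))
   \<and> (2 \<le> n \<longrightarrow> multilinear n (B_rec n) \<and> invariant br n (B_rec n) \<and> symmetric_map n (B_rec n))"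
proof (induction n rule: less_induct)
  case (less n)
  show ?case
  proof (cases "2 \<le> n")
    case True
    then show ?thesis
      using A_series_eq_exp_ad_expansion[OF True] multilinear_B_rec[OF True] invariant_B_rec[OF True]
        symmetric_B_rec[OF True] less.IH
      by auto
  next
    case False
    then consider "n = 0" | "n = 1" by fastforce
    then show ?thesis
    proof cases
      case 2
      have "tuples_ge2 1 1 = {}" by (rule tuples_ge2_eq_empty) simp
      then have "exp_ad_expansion d (ad_exp_series x y) 1 = br x y" for d x y
        by (simp add: exp_ad_expansion_def tuples_ge2_0 ad_exp_series_def)
      then show ?thesis using A1 by (simp add: 2 A_series_def diag_def)
    qed simp
  qed
qed

lemma exists_B:
  "\<exists>B. (\<forall>n\<ge>2. multilinear n (B n) \<and> invariant br n (B n) \<and> symmetric_map n (B n)) \<and>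
       (\<forall>n\<ge>2. \<forall>x y. diag n (A n) x y
          = exp_ad_expansion (\<lambda>l. B l (replicate l x)) (ad_exp_series x y) n)"
  using B_rec_solves by (intro exI[of _ B_rec]) (auto simp: A_series_def)

end

theorem theorem2:
  fixes br :: "'a::euclidean_space \<Rightarrow> 'a \<Rightarrow> 'a"
    and A :: "nat \<Rightarrow> 'a list \<Rightarrow> 'a"
  assumes leib: "left_leibniz br"
    and H0: "H0_zero br"
    and H1: "H1_zero br"
    and A0_eq: "\<And>x y. A 0 [x, y] = y"
    and A1_eq: "\<And>x y. A 1 [x, y] = br x y"
    and A_multi: "\<And>n. n \<ge> 2 \<Longrightarrow> multilinear (n + 1) (A n)"
    and A_inv: "\<And>n. n \<ge> 2 \<Longrightarrow> invariant br (n + 1) (A n)"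
    and A_sym: "\<And>n. n \<ge> 2 \<Longrightarrow> symmetric_first n (A n)"
    and A_rec: "\<And>p x y z. p \<ge> 1 \<Longrightarrow>
        diag p (A p) x (br y z) =
          br y (diag p (A p) x z) + br (diag p (A p) x y) z
          + (\<Sum>r=1..p-1. br (diag r (A r) x y) (diag (p - r) (A (p - r)) x z))"
  shows "(\<exists>B :: nat \<Rightarrow> 'a list \<Rightarrow> 'a.
            (\<forall>n\<ge>2. multilinear n (B n) \<and> invariant br n (B n) \<and> symmetric_map n (B n)) \<and>
            (\<forall>n\<ge>2. \<forall>x y. diag n (A n) x y =
               A0 br (replicate n x) y
               + (\<Sum>k=1..n div 2. \<Sum>ls\<in>{ls. length ls = k \<and> (\<forall>l\<in>set ls. 2 \<le> l) \<and> sum_list ls \<le> n}.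
                    A0 br (map (\<lambda>l. B l (replicate l x)) ls)
                       (A0 br (replicate (n - sum_list ls) x) y))))
       \<and> (\<forall>B B' :: nat \<Rightarrow> 'a list \<Rightarrow> 'a.
            ((\<forall>n\<ge>2. multilinear n (B n) \<and> invariant br n (B n) \<and> symmetric_map n (B n)) \<and>
             (\<forall>n\<ge>2. \<forall>x y. diag n (A n) x y =
               A0 br (replicate n x) y
               + (\<Sum>k=1..n div 2. \<Sum>ls\<in>{ls. length ls = k \<and> (\<forall>l\<in>set ls. 2 \<le> l) \<and> sum_list ls \<le> n}.
                    A0 br (map (\<lambda>l. B l (replicate l x)) ls)
                       (A0 br (replicate (n - sum_list ls) x) y)))) \<and>
            ((\<forall>n\<ge>2. multilinear n (B' n) \<and> invariant br n (B' n) \<and> symmetric_map n (B' n)) \<and>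
             (\<forall>n\<ge>2. \<forall>x y. diag n (A n) x y =
               A0 br (replicate n x) y
               + (\<Sum>k=1..n div 2. \<Sum>ls\<in>{ls. length ls = k \<and> (\<forall>l\<in>set ls. 2 \<le> l) \<and> sum_list ls \<le> n}.
                    A0 br (map (\<lambda>l. B' l (replicate l x)) ls)
                       (A0 br (replicate (n - sum_list ls) x) y))))
            \<longrightarrow> (\<forall>n\<ge>2. \<forall>xs. length xs = n \<longrightarrow> B n xs = B' n xs))"
proof -
  have bil: "bilinear br" and leibniz: "\<And>u v w. br u (br v w) = br (br u v) w + br v (br u w)"
    using leib unfolding left_leibniz_def by blast+
  interpret leibniz_deformation br A
    by unfold_locales (fact bil leibniz H0 H1 A1_eq A_multi A_inv A_rec)+
  have unique: "\<forall>n\<ge>2. \<forall>xs. length xs = n \<longrightarrow> B n xs = B' n xs"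
    if "\<forall>n\<ge>2. multilinear n (B n) \<and> invariant br n (B n) \<and> symmetric_map n (B n)"
      and "\<forall>n\<ge>2. \<forall>x y. diag n (A n) x y = exp_ad_expansion (\<lambda>l. B l (replicate l x)) (ad_exp_series x y) n"
      and "\<forall>n\<ge>2. multilinear n (B' n) \<and> invariant br n (B' n) \<and> symmetric_map n (B' n)"
      and "\<forall>n\<ge>2. \<forall>x y. diag n (A n) x y = exp_ad_expansion (\<lambda>l. B' l (replicate l x)) (ad_exp_series x y) n"
    for B B' :: "nat \<Rightarrow> 'a list \<Rightarrow> 'a"
    by (rule exp_ad_expansion_determines[where u=ad_exp_series]) (use that in auto)
  show ?thesis
    unfolding A0_sum_eq_exp_ad_expansion using exists_B unique by blast
qed

end
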